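(* Assume $a/b>\sqrt2$, $|u|<u_{\max}$ and $a^2+(u^2-2)c^2\ne0$. Let $\mathcal{C}^\dagger$ be the unit circle centered at $f_1=(-c,0)$. Then the radical axis of $\mathcal{C}^\dagger$ and $\mathcal{C}$ is perpendicular to the radical axis of $\mathcal{C}^\dagger$ and $\mathcal{C}'$.
   Context: The elliptic billiard is $\mathcal{E}: x^2/a^2+y^2/b^2=1$, $a>b>0$, $c=\sqrt{a^2-b^2}$, with $a/b>\sqrt2$, and $u_{\max}:=\frac{a}{c^2}\sqrt{a^2-2b^2}$. For parameter $u$ of the self-intersected 4-periodic family, $\mathcal{C}$ is the circle with center $C=\left(0,\frac{c^2u^2-a^2+2b^2}{2b\sqrt{1-u^2}}\right)$ and radius $R=\frac{a^2-c^2u^2}{2b\sqrt{1-u^2}}$ (through the 4-periodic's vertices and the foci), and $\mathcal{C}'$ is the circle with center $C'=\left(0,-\frac{2bc^2\sqrt{1-u^2}}{a^2+(u^2-2)c^2}\right)$ and radius $\left|\frac{c(c^2u^2-a^2)}{a^2+(u^2-2)c^2}\right|$ (through the outer polygon's vertices and the foci). *)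

theory Defs
  imports "HOL-Analysis.Analysis"
begin

definition ell_c :: "real \<Rightarrow> real \<Rightarrow> real" where
  "ell_c a b = sqrt (a\<^sup>2 - b\<^sup>2)"

definition u_max :: "real \<Rightarrow> real \<Rightarrow> real" where
  "u_max a b = a / (ell_c a b)\<^sup>2 * sqrt (a\<^sup>2 - 2 * b\<^sup>2)"

text \<open>Circle C through the 4-periodic's vertices and the foci.\<close>
definition center_C :: "real \<Rightarrow> real \<Rightarrow> real \<Rightarrow> real \<times> real" where
  "center_C a b u = (let c = ell_c a b in
     (0, (c\<^sup>2 * u\<^sup>2 - a\<^sup>2 + 2 * b\<^sup>2) / (2 * b * sqrt (1 - u\<^sup>2))))"

definition radius_C :: "real \<Rightarrow> real \<Rightarrow> real \<Rightarrow> real" where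
  "radius_C a b u = (let c = ell_c a b in
     (a\<^sup>2 - c\<^sup>2 * u\<^sup>2) / (2 * b * sqrt (1 - u\<^sup>2)))"

text \<open>Circle C' through the outer polygon's vertices and the foci.\<close>
definition center_C' :: "real \<Rightarrow> real \<Rightarrow> real \<Rightarrow> real \<times> real" where
  "center_C' a b u = (let c = ell_c a b in
     (0, - (2 * b * c\<^sup>2 * sqrt (1 - u\<^sup>2)) / (a\<^sup>2 + (u\<^sup>2 - 2) * c\<^sup>2)))"

definition radius_C' :: "real \<Rightarrow> real \<Rightarrow> real \<Rightarrow> real" where
  "radius_C' a b u = (let c = ell_c a b in
     \<bar>c * (c\<^sup>2 * u\<^sup>2 - a\<^sup>2) / (a\<^sup>2 + (u\<^sup>2 - 2) * c\<^sup>2)\<bar>)"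

definition power_pt :: "real \<times> real \<Rightarrow> real \<times> real \<Rightarrow> real \<Rightarrow> real" where
  "power_pt X P r = (dist X P)\<^sup>2 - r\<^sup>2"

definition radical_axis :: "real \<times> real \<Rightarrow> real \<Rightarrow> real \<times> real \<Rightarrow> real \<Rightarrow> (real \<times> real) set" where
  "radical_axis P1 r1 P2 r2 = {X. power_pt X P1 r1 = power_pt X P2 r2}"

definition line_pd :: "real \<times> real \<Rightarrow> real \<times> real \<Rightarrow> (real \<times> real) set" where
  "line_pd p d = {p + t *\<^sub>R d | t. True}"

definition perpendicular_lines :: "(real \<times> real) set \<Rightarrow> (real \<times> real) set \<Rightarrow> bool" where
  "perpendicular_lines L M \<longleftrightarrow> (\<exists>p d q e. d \<noteq> 0 \<and> e \<noteq> 0 \<and> L = line_pd p d \<and> M = line_pd q e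
      \<and> inner d e = 0)"

end

theory Submission
  imports Defs
begin

text \<open>
  The radical axis of two circles with distinct centres \<open>P\<close> and \<open>Q\<close> is a line orthogonal
  to \<open>Q - P\<close>. Both radical axes share the circle centred at the focus \<open>f\<^sub>1 = (-c, 0)\<close>, so
  they are perpendicular exactly when \<open>C - f\<^sub>1 = (c, y)\<close> and \<open>C' - f\<^sub>1 = (c, y')\<close> are
  orthogonal, i.e. when \<open>y y' = -c\<^sup>2\<close>. With \<open>s = \<surd>(1 - u\<^sup>2)\<close> and
  \<open>D = a\<^sup>2 + (u\<^sup>2 - 2) c\<^sup>2 = c\<^sup>2u\<^sup>2 - a\<^sup>2 + 2b\<^sup>2\<close> the ordinates are \<open>y = D / (2bs)\<close> and
  \<open>y' = -2bc\<^sup>2s / D\<close>, whose product is indeed \<open>-c\<^sup>2\<close>; the bound \<open>|u| < u\<^sub>m\<^sub>a\<^sub>x < 1\<close>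
  guarantees \<open>s > 0\<close>.
\<close>

lemma hyperplane_eq_line_pd:
  fixes n :: "real \<times> real" and k :: real
  assumes "n \<noteq> 0"
  shows "{X. inner X n = k} = line_pd ((k / (norm n)\<^sup>2) *\<^sub>R n) (- snd n, fst n)"
proof -
  obtain n1 n2 where n: "n = (n1, n2)" by fastforce
  have n_nonzero: "n1\<^sup>2 + n2\<^sup>2 \<noteq> 0" using assms n by (simp add: zero_prod_def)
  have norm_n: "(norm n)\<^sup>2 = n1\<^sup>2 + n2\<^sup>2" by (simp add: n norm_Pair)
  show ?thesis
  proof (intro set_eqI iffI)
    fix X :: "real \<times> real" assume "X \<in> {X. inner X n = k}"
    then obtain x y where X: "X = (x, y)" and k: "k = x * n1 + y * n2"
      by (cases X) (simp add: n inner_prod_def)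
    define N where "N = n1\<^sup>2 + n2\<^sup>2"
    define t where "t = (n1 * y - n2 * x) / N"
    have "x * N = k * n1 - (n1 * y - n2 * x) * n2" "y * N = k * n2 + (n1 * y - n2 * x) * n1"
      unfolding N_def k by (simp_all add: algebra_simps power2_eq_square)
    then have "x = k / N * n1 - t * n2" "y = k / N * n2 + t * n1"
      unfolding t_def using n_nonzero[folded N_def] by (simp_all add: field_simps)
    then have "X = (k / (norm n)\<^sup>2) *\<^sub>R n + t *\<^sub>R (- snd n, fst n)"
      unfolding norm_n N_def[symmetric] by (simp add: X n)
    then show "X \<in> line_pd ((k / (norm n)\<^sup>2) *\<^sub>R n) (- snd n, fst n)"
      unfolding line_pd_def by blast
  next
    fix X assume "X \<in> line_pd ((k / (norm n)\<^sup>2) *\<^sub>R n) (- snd n, fst n)"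
    then obtain t where "X = (k / (norm n)\<^sup>2) *\<^sub>R n + t *\<^sub>R (- snd n, fst n)"
      unfolding line_pd_def by blast
    moreover have "inner (- snd n, fst n) n = 0" by (simp add: inner_prod_def)
    ultimately have "inner X n = k / (norm n)\<^sup>2 * (norm n)\<^sup>2"
      by (simp add: inner_add_left power2_norm_eq_inner del: scaleR_Pair)
    then show "X \<in> {X. inner X n = k}" using assms by simp
  qed
qed

lemma radical_axis_eq_hyperplane:
  "radical_axis P r Q s = {X. inner X (Q - P) = ((norm Q)\<^sup>2 - (norm P)\<^sup>2 + r\<^sup>2 - s\<^sup>2) / 2}"
  unfolding radical_axis_def power_pt_def dist_norm
  by (auto simp: power2_norm_eq_inner inner_diff_left inner_diff_right inner_commute field_simps)

lemma radical_axis_eq_line_pd: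
  assumes "P \<noteq> Q"
  shows "\<exists>p. radical_axis P r Q s = line_pd p (- snd (Q - P), fst (Q - P))"
  unfolding radical_axis_eq_hyperplane
  using hyperplane_eq_line_pd assms by (metis right_minus_eq)

lemma perpendicular_radical_axes:
  assumes "P \<noteq> Q" and "P' \<noteq> Q'" and "inner (Q - P) (Q' - P') = 0"
  shows "perpendicular_lines (radical_axis P r Q s) (radical_axis P' r' Q' s')"
proof -
  obtain p where p: "radical_axis P r Q s = line_pd p (- snd (Q - P), fst (Q - P))"
    using radical_axis_eq_line_pd[OF assms(1)] by blast
  obtain q where q: "radical_axis P' r' Q' s' = line_pd q (- snd (Q' - P'), fst (Q' - P'))"
    using radical_axis_eq_line_pd[OF assms(2)] by blast
  have "inner (- snd (Q - P), fst (Q - P)) (- snd (Q' - P'), fst (Q' - P')) = 0"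
    using assms(3) by (simp add: inner_prod_def algebra_simps)
  moreover have "(- snd (Q - P), fst (Q - P)) \<noteq> 0" "(- snd (Q' - P'), fst (Q' - P')) \<noteq> 0"
    using assms(1,2) by (auto simp: zero_prod_def prod_eq_iff)
  ultimately show ?thesis
    unfolding perpendicular_lines_def using p q by blast
qed

lemma u_max_lt_one:
  assumes "a > b" and "b > 0" and "a / b > sqrt 2"
  shows "u_max a b < 1"
proof -
  define c where "c = ell_c a b"
  define w where "w = sqrt (a\<^sup>2 - 2 * b\<^sup>2)"
  have c2: "c\<^sup>2 = a\<^sup>2 - b\<^sup>2" unfolding c_def ell_c_def using assms(1,2) by simp
  have "sqrt 2 * b < a" using assms(2,3) by (simp add: field_simps)
  then have "(sqrt 2 * b)\<^sup>2 < a\<^sup>2" using assms(2) by (intro power_strict_mono) auto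
  then have w2: "w\<^sup>2 = a\<^sup>2 - 2 * b\<^sup>2" unfolding w_def by (simp add: power_mult_distrib)
  have "(a * w)\<^sup>2 = (c\<^sup>2)\<^sup>2 - b ^ 4"
    unfolding c2 power_mult_distrib w2 by (simp add: eval_nat_numeral algebra_simps)
  then have "(a * w)\<^sup>2 < (c\<^sup>2)\<^sup>2" using assms(2) by simp
  then have "a * w < c\<^sup>2" by (rule power2_less_imp_less) simp
  moreover have "c\<^sup>2 > 0" using c2 assms(1,2) by (simp add: power_strict_mono)
  ultimately show ?thesis unfolding u_max_def c_def[symmetric] w_def[symmetric] by simp
qed

lemma center_C_center_C'_ordinates:
  assumes "a > b" and "b > 0" and "u\<^sup>2 < 1"
    and "a\<^sup>2 + (u\<^sup>2 - 2) * (ell_c a b)\<^sup>2 \<noteq> 0"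
  shows "fst (center_C a b u) = 0" "fst (center_C' a b u) = 0"
    and "snd (center_C a b u) * snd (center_C' a b u) = - (ell_c a b)\<^sup>2"
proof -
  define c where "c = ell_c a b"
  define s where "s = sqrt (1 - u\<^sup>2)"
  define D where "D = a\<^sup>2 + (u\<^sup>2 - 2) * c\<^sup>2"
  have "s > 0" unfolding s_def using assms(3) by simp
  have "D \<noteq> 0" using assms(4) unfolding D_def c_def .
  have "c\<^sup>2 = a\<^sup>2 - b\<^sup>2" unfolding c_def ell_c_def using assms(1,2) by simp
  then have "c\<^sup>2 * u\<^sup>2 - a\<^sup>2 + 2 * b\<^sup>2 = D" unfolding D_def by (simp add: algebra_simps)
  then have y: "snd (center_C a b u) = D / (2 * b * s)"
    unfolding center_C_def Let_def c_def[symmetric] s_def[symmetric] by simp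
  have y': "snd (center_C' a b u) = - (2 * b * c\<^sup>2 * s) / D"
    unfolding center_C'_def Let_def c_def[symmetric] s_def[symmetric] D_def[symmetric] by simp
  show "snd (center_C a b u) * snd (center_C' a b u) = - (ell_c a b)\<^sup>2"
    unfolding y y' using \<open>s > 0\<close> \<open>D \<noteq> 0\<close> assms(2) unfolding c_def[symmetric] by (simp add: field_simps)
  show "fst (center_C a b u) = 0" "fst (center_C' a b u) = 0"
    by (simp_all add: center_C_def center_C'_def Let_def)
qed

theorem mainTheorem7:
  fixes a b u :: real
  assumes "a > b" and "b > 0"
    and "a / b > sqrt 2"
    and "\<bar>u\<bar> < u_max a b"
    and "a\<^sup>2 + (u\<^sup>2 - 2) * (ell_c a b)\<^sup>2 \<noteq> 0"
  shows "perpendicular_lines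
           (radical_axis (- ell_c a b, 0) 1 (center_C a b u) (radius_C a b u))
           (radical_axis (- ell_c a b, 0) 1 (center_C' a b u) (radius_C' a b u))"
proof -
  define F :: "real \<times> real" where "F = (- ell_c a b, 0)"
  have "ell_c a b > 0" unfolding ell_c_def using assms(1,2) by (simp add: power_strict_mono)
  have "\<bar>u\<bar> < 1" using assms(4) u_max_lt_one[OF assms(1-3)] by linarith
  then have "u\<^sup>2 < 1" by (simp add: abs_square_less_1)
  note centers = center_C_center_C'_ordinates[OF assms(1,2) \<open>u\<^sup>2 < 1\<close> assms(5)]
  have "center_C a b u - F = (ell_c a b, snd (center_C a b u))"
       "center_C' a b u - F = (ell_c a b, snd (center_C' a b u))"
    using centers(1,2) by (simp_all add: F_def prod_eq_iff)
  moreover from this have "F \<noteq> center_C a b u" "F \<noteq> center_C' a b u"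
    using \<open>ell_c a b > 0\<close> by (auto simp: zero_prod_def)
  ultimately show ?thesis
    unfolding F_def[symmetric]
    by (intro perpendicular_radical_axes) (simp_all add: centers(3) power2_eq_square)
qed

end
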